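(* Let $T$ be an $spo$-tableau, let $x\in B_1$, and let $S_1$ be the box of $x\rightarrow T$ not in the shape of $T$. Let $y\in B_0$ be such that the insertion $(x\rightarrow T)\leftarrow y$ does not cause a cancellation, and let $S_2$ be the box of $(x\rightarrow T)\leftarrow y$ not in the shape of $x\rightarrow T$. Then $S_2$ lies in a column strictly to the right of the column of $S_1$ and in a row weakly above (row index $\le$) the row of $S_1$.
   Context: Fix positive integers $m,n$. Let $B_0=\{1,\bar1,2,\bar2,\dots,m,\bar m\}$, $B_1=\{1^\circ,\dots,n^\circ\}$, $B=B_0\cup B_1$, totally ordered by $1<\bar1<2<\bar2<\cdots<m<\bar m<1^\circ<\cdots<n^\circ$. Rows are numbered from the top starting at 1, columns from the left. An $spo$-tableau of shape $\lambda$ is a filling of the Young diagram of $\lambda$ with entries of $B$ such that (i) the boxes containing entries of $B_0$ form a Young diagram $\sigma\subseteq\lambda$, and this part is weakly increasing along rows, strictly increasing down columns, and every entry in row $i$ is $\ge i$; (ii) the entries of $B_1$ (filling $\lambda/\sigma$) are strictly increasing along rows and weakly increasing down columns. $spo$-insertion: a forward jeu de taquin slide on an empty box with right neighbour $a$ and lower neighbour $b$ moves $a$ left into the empty box if $a<b$ or ($a=b\in B_1$), and moves $b$ up into the empty box if $b<a$ or ($a=b\in B_0$); if only one neighbour exists it moves in; slides are repeated until the empty box has no right or lower neighbour, and then that box is deleted. Inserting $z\in B_0$ into row $r$: if no entry of the row exceeds $z$, append $z$ in a new box at the end of the row; otherwise let $w$ be the least entry of the row with $w>z$; if $z=r$ (unbarred)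 and $w=\bar r$, delete $\bar r$ leaving an empty box (a cancellation); otherwise replace $w$ by $z$, displacing $w$. Inserting $z\in B_1$ into column $c$: if no entry of the column exceeds $z$, append $z$ in a new box at the bottom; otherwise replace the least entry $w>z$ of the column by $z$, displacing $w$. To insert $x\in B_0$ into $T$ (result $T\leftarrow x$) start by inserting $x$ into row 1; to insert $x\in B_1$ (result $x\rightarrow T$) start by inserting $x$ into column 1. Whenever an entry $w$ is displaced from a box in row $r$, column $c$: if $w\in B_0$ insert it into row $r+1$; if $w\in B_1$ insert it into column $c+1$. The process ends when an entry is placed in a new box, or when a cancellation occurs, in which case the empty box is moved to an outer corner by forward slides and deleted. If no cancellation occurs the result has exactly one new box. *)

theory Defs
  imports Main
begin

text \<open>U i is the unbarred letter i, Bar i is the barred letter, Circ j is j-circle.\<close>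
datatype entry = U nat | Bar nat | Circ nat

fun isB1 :: "entry \<Rightarrow> bool" where
  "isB1 (Circ _) = True"
| "isB1 _ = False"

fun code0 :: "entry \<Rightarrow> nat" where
  "code0 (U i) = 2 * i"
| "code0 (Bar i) = 2 * i + 1"
| "code0 (Circ _) = 0"

text \<open>Total order 1 < 1bar < 2 < 2bar < ... < m < mbar < 1circ < ... < ncirc\<close>
fun elt_less :: "entry \<Rightarrow> entry \<Rightarrow> bool" where
  "elt_less (Circ a) (Circ b) = (a < b)"
| "elt_less (Circ a) _ = False"
| "elt_less _ (Circ b) = True"
| "elt_less e f = (code0 e < code0 f)"

definition elt_le :: "entry \<Rightarrow> entry \<Rightarrow> bool" where
  "elt_le e f \<longleftrightarrow> elt_less e f \<or> e = f"

definition B0 :: "nat \<Rightarrow> entry set" where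
  "B0 m = {U i | i. 1 \<le> i \<and> i \<le> m} \<union> {Bar i | i. 1 \<le> i \<and> i \<le> m}"

definition B1 :: "nat \<Rightarrow> entry set" where
  "B1 n = {Circ j | j. 1 \<le> j \<and> j \<le> n}"

text \<open>A filling is a partial map from boxes (row, column), both numbered from 1, to entries.\<close>
type_synonym tab = "nat \<times> nat \<Rightarrow> entry option"

definition young :: "(nat \<times> nat) set \<Rightarrow> bool" where
  "young D \<longleftrightarrow> finite D \<and>
     (\<forall>i j. (i, j) \<in> D \<longrightarrow> 1 \<le> i \<and> 1 \<le> j \<and>
        (\<forall>i' j'. 1 \<le> i' \<and> i' \<le> i \<and> 1 \<le> j' \<and> j' \<le> j \<longrightarrow> (i', j') \<in> D))"

definition sigma_part :: "tab \<Rightarrow> (nat \<times> nat) set" where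
  "sigma_part T = {p. \<exists>e. T p = Some e \<and> \<not> isB1 e}"

definition spo_tableau :: "nat \<Rightarrow> nat \<Rightarrow> tab \<Rightarrow> bool" where
  "spo_tableau m n T \<longleftrightarrow>
     young (dom T) \<and>
     (\<forall>p e. T p = Some e \<longrightarrow> e \<in> B0 m \<union> B1 n) \<and>
     young (sigma_part T) \<and>
     \<comment> \<open>B0 part: weakly increasing along rows\<close>
     (\<forall>i j j' e f. j < j' \<and> T (i, j) = Some e \<and> T (i, j') = Some f \<and> e \<in> B0 m \<and> f \<in> B0 m
        \<longrightarrow> elt_le e f) \<and>
     \<comment> \<open>B0 part: strictly increasing down columns\<close>
     (\<forall>i i' j e f. i < i' \<and> T (i, j) = Some e \<and> T (i', j) = Some f \<and> e \<in> B0 m \<and> f \<in> B0 m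
        \<longrightarrow> elt_less e f) \<and>
     \<comment> \<open>B0 part: every entry in row i is at least i\<close>
     (\<forall>i j e. T (i, j) = Some e \<and> e \<in> B0 m \<longrightarrow> elt_le (U i) e) \<and>
     \<comment> \<open>B1 part: strictly increasing along rows\<close>
     (\<forall>i j j' e f. j < j' \<and> T (i, j) = Some e \<and> T (i, j') = Some f \<and> e \<in> B1 n \<and> f \<in> B1 n
        \<longrightarrow> elt_less e f) \<and>
     \<comment> \<open>B1 part: weakly increasing down columns\<close>
     (\<forall>i i' j e f. i < i' \<and> T (i, j) = Some e \<and> T (i', j) = Some f \<and> e \<in> B1 n \<and> f \<in> B1 n
        \<longrightarrow> elt_le e f)"

definition row_len :: "tab \<Rightarrow> nat \<Rightarrow> nat" where
  "row_len T r = card {c. T (r, c) \<noteq> None}"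

definition col_len :: "tab \<Rightarrow> nat \<Rightarrow> nat" where
  "col_len T c = card {r. T (r, c) \<noteq> None}"

text \<open>Forward jeu de taquin slides of an empty box (represented by None) at position (i,j);
  the final empty box is simply deleted (it stays None).\<close>
inductive slide :: "tab \<Rightarrow> nat \<times> nat \<Rightarrow> tab \<Rightarrow> bool" where
  stop: "T (i, j + 1) = None \<Longrightarrow> T (i + 1, j) = None \<Longrightarrow> slide T (i, j) T"
| right_only: "T (i, j + 1) = Some a \<Longrightarrow> T (i + 1, j) = None \<Longrightarrow>
     slide (T((i, j) := Some a, (i, j + 1) := None)) (i, j + 1) T' \<Longrightarrow> slide T (i, j) T'"
| down_only: "T (i, j + 1) = None \<Longrightarrow> T (i + 1, j) = Some b \<Longrightarrow>
     slide (T((i, j) := Some b, (i + 1, j) := None)) (i + 1, j) T' \<Longrightarrow> slide T (i, j) T'"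
| right: "T (i, j + 1) = Some a \<Longrightarrow> T (i + 1, j) = Some b \<Longrightarrow>
     elt_less a b \<or> (a = b \<and> isB1 a) \<Longrightarrow>
     slide (T((i, j) := Some a, (i, j + 1) := None)) (i, j + 1) T' \<Longrightarrow> slide T (i, j) T'"
| down: "T (i, j + 1) = Some a \<Longrightarrow> T (i + 1, j) = Some b \<Longrightarrow>
     elt_less b a \<or> (a = b \<and> \<not> isB1 a) \<Longrightarrow>
     slide (T((i, j) := Some b, (i + 1, j) := None)) (i + 1, j) T' \<Longrightarrow> slide T (i, j) T'"

datatype job = RowIns entry nat | ColIns entry nat

text \<open>ins_run T job T' canc: running the insertion process from tableau T with pending
  job ends with tableau T'; canc records whether the process ended with a cancellation.\<close>
inductive ins_run :: "tab \<Rightarrow> job \<Rightarrow> tab \<Rightarrow> bool \<Rightarrow> bool" where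
  row_append: "\<forall>c w. T (r, c) = Some w \<longrightarrow> \<not> elt_less z w \<Longrightarrow>
     ins_run T (RowIns z r) (T((r, row_len T r + 1) := Some z)) False"
| row_cancel: "T (r, c) = Some w \<Longrightarrow> elt_less z w \<Longrightarrow>
     (\<forall>c' w'. T (r, c') = Some w' \<and> elt_less z w' \<longrightarrow> elt_le w w' \<and> (w' = w \<longrightarrow> c \<le> c')) \<Longrightarrow>
     z = U r \<Longrightarrow> w = Bar r \<Longrightarrow>
     slide (T((r, c) := None)) (r, c) T' \<Longrightarrow>
     ins_run T (RowIns z r) T' True"
| row_bump: "T (r, c) = Some w \<Longrightarrow> elt_less z w \<Longrightarrow>
     (\<forall>c' w'. T (r, c') = Some w' \<and> elt_less z w' \<longrightarrow> elt_le w w' \<and> (w' = w \<longrightarrow> c \<le> c')) \<Longrightarrow>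
     \<not> (z = U r \<and> w = Bar r) \<Longrightarrow>
     ins_run (T((r, c) := Some z)) (if isB1 w then ColIns w (c + 1) else RowIns w (r + 1)) T' b \<Longrightarrow>
     ins_run T (RowIns z r) T' b"
| col_append: "\<forall>r w. T (r, c) = Some w \<longrightarrow> \<not> elt_less z w \<Longrightarrow>
     ins_run T (ColIns z c) (T((col_len T c + 1, c) := Some z)) False"
| col_bump: "T (r, c) = Some w \<Longrightarrow> elt_less z w \<Longrightarrow>
     (\<forall>r' w'. T (r', c) = Some w' \<and> elt_less z w' \<longrightarrow> elt_le w w' \<and> (w' = w \<longrightarrow> r \<le> r')) \<Longrightarrow>
     ins_run (T((r, c) := Some z)) (if isB1 w then ColIns w (c + 1) else RowIns w (r + 1)) T' b \<Longrightarrow>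
     ins_run T (ColIns z c) T' b"

text \<open>T \<leftarrow> y (y in B0): start in row 1; x \<rightarrow> T (x in B1): start in column 1.\<close>
definition row_insert :: "tab \<Rightarrow> entry \<Rightarrow> tab \<Rightarrow> bool \<Rightarrow> bool" where
  "row_insert T y T' canc \<longleftrightarrow> ins_run T (RowIns y 1) T' canc"

definition col_insert :: "entry \<Rightarrow> tab \<Rightarrow> tab \<Rightarrow> bool \<Rightarrow> bool" where
  "col_insert x T T' canc \<longleftrightarrow> ins_run T (ColIns x 1) T' canc"

end

theory Submission
  imports Defs
begin

(* Column insertion of x \<in> B1 only ever displaces B1 letters, which exceed all of B0, so it
   leaves the B0 part alone and runs along a bumping path of B1 letters
   x = X 1 < X 2 < ... < X k, the letter X c ending up in column c at row R c; the new box is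
   S1 = (R k, k), at the bottom of column k.

   Row insertion of y \<in> B0 into the result moves B0 letters down, row by row. A B0 letter
   entering row r came from some box (r - 1, d), and all boxes weakly north-west of (r - 1, d)
   belong to the B0 part, so every B1 letter in a column <= d lies in a row >= r. If the letter
   is appended to row r, then d exceeds the length of row r, and that row must reach column k
   (otherwise the path letter in the next column would lie above row r); so the new box is
   right of column k and r <= R k. If instead it displaces a B1 letter w from a box (r, c),
   then c <= d, which gives w <= X c < X (c + 1) if c < k and r <= R k otherwise. From then on
   the column insertion stays dominated by the path: in a column c <= k the inserted letter is
   smaller than X c and must bump, and beyond column k all letters of the column from some row
   <= R k downward exceed it, so it is placed at or above that row. Either way S2 lies in a
   column > k and a row <= R k. *)

section \<open>The order on letters\<close>

lemma elt_less_irrefl [simp]: "\<not> elt_less e e"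
  by (cases e) auto

lemma elt_less_trans: "elt_less a b \<Longrightarrow> elt_less b c \<Longrightarrow> elt_less a c"
  by (cases a; cases b; cases c) auto

lemma elt_less_linear: "elt_less a b \<or> a = b \<or> elt_less b a"
  by (cases a; cases b) (auto, presburger+)

lemma elt_less_asym: "elt_less a b \<Longrightarrow> \<not> elt_less b a"
  using elt_less_trans elt_less_irrefl by blast

lemma not_elt_less: "\<not> elt_less a b \<longleftrightarrow> elt_le b a"
  unfolding elt_le_def using elt_less_linear elt_less_asym by blast

lemma elt_le_antisym: "elt_le a b \<Longrightarrow> elt_le b a \<Longrightarrow> a = b"
  unfolding elt_le_def using elt_less_asym by blast

lemma elt_le_less_trans: "elt_le a b \<Longrightarrow> elt_less b c \<Longrightarrow> elt_less a c"
  unfolding elt_le_def using elt_less_trans by blast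

lemma elt_less_le_trans: "elt_less a b \<Longrightarrow> elt_le b c \<Longrightarrow> elt_less a c"
  unfolding elt_le_def using elt_less_trans by blast

lemma isB1_upward: "elt_less v w \<Longrightarrow> isB1 v \<Longrightarrow> isB1 w"
  by (cases v; cases w) auto

lemma elt_less_B0_B1: "\<not> isB1 e \<Longrightarrow> isB1 f \<Longrightarrow> elt_less e f"
  by (cases e; cases f) auto

section \<open>Young diagrams and tableau conditions\<close>

lemma young_pos: "young D \<Longrightarrow> (i, j) \<in> D \<Longrightarrow> 1 \<le> i \<and> 1 \<le> j"
  unfolding young_def by blast

lemma young_downward:
  "young D \<Longrightarrow> (i, j) \<in> D \<Longrightarrow> 1 \<le> i' \<Longrightarrow> i' \<le> i \<Longrightarrow> 1 \<le> j' \<Longrightarrow> j' \<le> j \<Longrightarrow> (i', j') \<in> D"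
  unfolding young_def by blast

lemma young_dom_pos: "young (dom A) \<Longrightarrow> A (i, j) = Some e \<Longrightarrow> 1 \<le> i \<and> 1 \<le> j"
  using young_pos by blast

lemma young_dom_downward:
  "young (dom A) \<Longrightarrow> A (i, j) = Some e \<Longrightarrow> 1 \<le> i' \<Longrightarrow> i' \<le> i \<Longrightarrow> 1 \<le> j' \<Longrightarrow> j' \<le> j \<Longrightarrow>
    (i', j') \<in> dom A"
  using young_downward by blast

lemma initial_segment_eq:
  fixes S :: "nat set"
  assumes "finite S" and "0 \<notin> S" and "\<And>i i'. i \<in> S \<Longrightarrow> 1 \<le> i' \<Longrightarrow> i' \<le> i \<Longrightarrow> i' \<in> S"
  shows "S = {1..card S}"
proof (cases "S = {}")
  case False
  have "S \<subseteq> {1..Max S}"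
  proof
    fix x
    assume "x \<in> S"
    then show "x \<in> {1..Max S}"
      using assms(2) Max_ge[OF assms(1)] by (cases x) auto
  qed
  moreover have "{1..Max S} \<subseteq> S"
    using assms(3) Max_in[OF assms(1) False] by auto
  ultimately have "S = {1..Max S}" by blast
  then show ?thesis
    by (metis card_atLeastAtMost diff_Suc_1)
qed simp

lemma young_row_len:
  assumes "young (dom A)"
  shows "{j. (i, j) \<in> dom A} = {1..row_len A i}"
proof -
  have "{j. (i, j) \<in> dom A} = {1..card {j. (i, j) \<in> dom A}}"
  proof (rule initial_segment_eq)
    have "{j. (i, j) \<in> dom A} \<subseteq> snd ` dom A"
      by force
    then show "finite {j. (i, j) \<in> dom A}"
      using finite_subset finite_imageI assms unfolding young_def by blast
    show "0 \<notin> {j. (i, j) \<in> dom A}"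
      using young_pos[OF assms] by fastforce
    show "j' \<in> {j. (i, j) \<in> dom A}" if "j \<in> {j. (i, j) \<in> dom A}" "1 \<le> j'" "j' \<le> j" for j j'
      using that young_downward[OF assms] young_pos[OF assms] by blast
  qed
  then show ?thesis
    unfolding row_len_def by (simp add: domIff)
qed

lemma young_col_len:
  assumes "young (dom A)"
  shows "{i. (i, j) \<in> dom A} = {1..col_len A j}"
proof -
  have "{i. (i, j) \<in> dom A} = {1..card {i. (i, j) \<in> dom A}}"
  proof (rule initial_segment_eq)
    have "{i. (i, j) \<in> dom A} \<subseteq> fst ` dom A"
      by force
    then show "finite {i. (i, j) \<in> dom A}"
      using finite_subset finite_imageI assms unfolding young_def by blast
    show "0 \<notin> {i. (i, j) \<in> dom A}"
      using young_pos[OF assms] by fastforce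
    show "i' \<in> {i. (i, j) \<in> dom A}" if "i \<in> {i. (i, j) \<in> dom A}" "1 \<le> i'" "i' \<le> i" for i i'
      using that young_downward[OF assms] young_pos[OF assms] by blast
  qed
  then show ?thesis
    unfolding col_len_def by (simp add: domIff)
qed

lemma young_insert:
  assumes "young D" "1 \<le> i" "1 \<le> j" "i = 1 \<or> (i - 1, j) \<in> D" "j = 1 \<or> (i, j - 1) \<in> D"
  shows "young (insert (i, j) D)"
proof -
  have corner: "(i', j') \<in> insert (i, j) D" if "1 \<le> i'" "i' \<le> i" "1 \<le> j'" "j' \<le> j" for i' j'
  proof (cases "i' < i")
    case True
    then show ?thesis
      using assms(4) that young_downward[OF assms(1), of "i - 1" j i' j'] by auto
  next
    case False
    then show ?thesis
      using assms(5) that young_downward[OF assms(1), of i "j - 1" i' j'] by fastforce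
  qed
  show ?thesis
    unfolding young_def
  proof (intro conjI allI impI)
    show "finite (insert (i, j) D)"
      using assms(1) by (simp add: young_def)
  next
    fix a b
    assume "(a, b) \<in> insert (i, j) D"
    then show "1 \<le> a" "1 \<le> b"
      using assms(2,3) young_pos[OF assms(1)] by auto
  next
    fix a b i' j'
    assume "(a, b) \<in> insert (i, j) D" and "1 \<le> i' \<and> i' \<le> a \<and> 1 \<le> j' \<and> j' \<le> b"
    then show "(i', j') \<in> insert (i, j) D"
      using corner young_downward[OF assms(1), of a b i' j'] by auto
  qed
qed

lemma sigma_part_eqI:
  assumes "\<And>p e. \<not> isB1 e \<Longrightarrow> A p = Some e \<longleftrightarrow> B p = Some e"
  shows "sigma_part A = sigma_part B"
  using assms unfolding sigma_part_def by blast

lemma B0_part_downward: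
  assumes "young (sigma_part A)" "A (i, j) = Some e" "\<not> isB1 e"
    and "1 \<le> i'" "i' \<le> i" "1 \<le> j'" "j' \<le> j" "A (i', j') = Some f"
  shows "\<not> isB1 f"
proof -
  have "(i', j') \<in> sigma_part A"
    using young_downward[OF assms(1)] assms(2-7) unfolding sigma_part_def by blast
  then show ?thesis
    using assms(8) unfolding sigma_part_def by auto
qed

definition B1_rows_strict :: "tab \<Rightarrow> bool" where
  "B1_rows_strict A \<longleftrightarrow> (\<forall>i j j' e f. j < j' \<longrightarrow> A (i, j) = Some e \<longrightarrow> A (i, j') = Some f \<longrightarrow>
     isB1 e \<longrightarrow> isB1 f \<longrightarrow> elt_less e f)"

definition B1_cols_weak :: "tab \<Rightarrow> bool" where
  "B1_cols_weak A \<longleftrightarrow> (\<forall>i i' j e f. i < i' \<longrightarrow> A (i, j) = Some e \<longrightarrow> A (i', j) = Some f \<longrightarrow>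
     isB1 e \<longrightarrow> isB1 f \<longrightarrow> elt_le e f)"

definition B0_cols_strict :: "tab \<Rightarrow> bool" where
  "B0_cols_strict A \<longleftrightarrow> (\<forall>i i' j e f. i < i' \<longrightarrow> A (i, j) = Some e \<longrightarrow> A (i', j) = Some f \<longrightarrow>
     \<not> isB1 e \<longrightarrow> \<not> isB1 f \<longrightarrow> elt_less e f)"

lemma B1_rows_strictD:
  "B1_rows_strict A \<Longrightarrow> j < j' \<Longrightarrow> A (i, j) = Some e \<Longrightarrow> A (i, j') = Some f \<Longrightarrow>
    isB1 e \<Longrightarrow> isB1 f \<Longrightarrow> elt_less e f"
  unfolding B1_rows_strict_def by blast

lemma B1_cols_weakD:
  "B1_cols_weak A \<Longrightarrow> i < i' \<Longrightarrow> A (i, j) = Some e \<Longrightarrow> A (i', j) = Some f \<Longrightarrow>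
    isB1 e \<Longrightarrow> isB1 f \<Longrightarrow> elt_le e f"
  unfolding B1_cols_weak_def by blast

lemma B1_cols_weakD':
  "B1_cols_weak A \<Longrightarrow> i \<le> i' \<Longrightarrow> A (i, j) = Some e \<Longrightarrow> A (i', j) = Some f \<Longrightarrow>
    isB1 e \<Longrightarrow> isB1 f \<Longrightarrow> elt_le e f"
  using B1_cols_weakD[of A i i' j e f] unfolding elt_le_def by (cases "i = i'") auto

lemma B0_cols_strictD:
  "B0_cols_strict A \<Longrightarrow> i < i' \<Longrightarrow> A (i, j) = Some e \<Longrightarrow> A (i', j) = Some f \<Longrightarrow>
    \<not> isB1 e \<Longrightarrow> \<not> isB1 f \<Longrightarrow> elt_less e f"
  unfolding B0_cols_strict_def by blast

lemma spo_tableau_orders: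
  assumes "spo_tableau m n T"
  shows "B1_rows_strict T" and "B1_cols_weak T" and "B0_cols_strict T"
proof -
  have "isB1 e \<longleftrightarrow> e \<in> B1 n" "\<not> isB1 e \<longleftrightarrow> e \<in> B0 m" if "T p = Some e" for p e
  proof -
    have "e \<in> B0 m \<union> B1 n"
      using assms that unfolding spo_tableau_def by metis
    then show "isB1 e \<longleftrightarrow> e \<in> B1 n" "\<not> isB1 e \<longleftrightarrow> e \<in> B0 m"
      unfolding B0_def B1_def by auto
  qed
  note kind = this
  show "B1_rows_strict T"
    unfolding B1_rows_strict_def
  proof (intro allI impI)
    fix i j j' e f
    assume "j < j'" "T (i, j) = Some e" "T (i, j') = Some f" "isB1 e" "isB1 f"
    with kind have "e \<in> B1 n" "f \<in> B1 n" by blast+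
    with \<open>j < j'\<close> \<open>T (i, j) = Some e\<close> \<open>T (i, j') = Some f\<close> show "elt_less e f"
      using assms unfolding spo_tableau_def by metis
  qed
  show "B1_cols_weak T"
    unfolding B1_cols_weak_def
  proof (intro allI impI)
    fix i i' j e f
    assume "i < i'" "T (i, j) = Some e" "T (i', j) = Some f" "isB1 e" "isB1 f"
    with kind have "e \<in> B1 n" "f \<in> B1 n" by blast+
    with \<open>i < i'\<close> \<open>T (i, j) = Some e\<close> \<open>T (i', j) = Some f\<close> show "elt_le e f"
      using assms unfolding spo_tableau_def by metis
  qed
  show "B0_cols_strict T"
    unfolding B0_cols_strict_def
  proof (intro allI impI)
    fix i i' j e f
    assume "i < i'" "T (i, j) = Some e" "T (i', j) = Some f" "\<not> isB1 e" "\<not> isB1 f"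
    with kind have "e \<in> B0 m" "f \<in> B0 m" by blast+
    with \<open>i < i'\<close> \<open>T (i, j) = Some e\<close> \<open>T (i', j) = Some f\<close> show "elt_less e f"
      using assms unfolding spo_tableau_def by metis
  qed
qed

lemma B1_rows_strict_upd:
  assumes "B1_rows_strict A"
    and "\<And>j u. j < c \<Longrightarrow> A (r, j) = Some u \<Longrightarrow> isB1 u \<Longrightarrow> elt_less u z"
    and "\<And>j u. c < j \<Longrightarrow> A (r, j) = Some u \<Longrightarrow> isB1 u \<Longrightarrow> elt_less z u"
  shows "B1_rows_strict (A((r, c) \<mapsto> z))"
  using assms unfolding B1_rows_strict_def by auto

lemma B1_cols_weak_upd:
  assumes "B1_cols_weak A"
    and "\<And>i u. i < r \<Longrightarrow> A (i, c) = Some u \<Longrightarrow> isB1 u \<Longrightarrow> elt_le u z"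
    and "\<And>i u. r < i \<Longrightarrow> A (i, c) = Some u \<Longrightarrow> isB1 u \<Longrightarrow> elt_le z u"
  shows "B1_cols_weak (A((r, c) \<mapsto> z))"
  using assms unfolding B1_cols_weak_def by auto

lemma B1_left_less:
  assumes "young (sigma_part A)" "B1_rows_strict A" "A (r, c) = Some u"
    and "isB1 u \<Longrightarrow> elt_less u z"
    and "1 \<le> j" "j \<le> c" "A (r, j) = Some e" "isB1 e"
  shows "elt_less e z"
proof (cases "isB1 u")
  case True
  have "elt_le e u"
    using B1_rows_strictD[OF assms(2) _ assms(7,3,8) True] assms(3,6,7)
    by (cases "j = c") (auto simp: elt_le_def)
  then show ?thesis
    using assms(4) True elt_le_less_trans by blast
next
  case False
  have "(r, c) \<in> sigma_part A"
    using assms(3) False unfolding sigma_part_def by auto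
  then have "1 \<le> r"
    using young_pos[OF assms(1)] by blast
  then show ?thesis
    using B0_part_downward[OF assms(1,3) False _ _ assms(5,6,7)] assms(8) by auto
qed

lemma B1_next_col_greater:
  assumes "young (dom A)" "young (sigma_part A)" "B1_rows_strict A" "B1_cols_weak A"
    and "A (q, c) = Some w" "isB1 w" "q \<le> i" "A (i, c + 1) = Some u"
  shows "isB1 u \<and> elt_less w u"
proof -
  have pos: "1 \<le> q" "1 \<le> c"
    using young_dom_pos[OF assms(1,5)] by auto
  have B1_right: "isB1 u'" if "q \<le> i'" "A (i', c + 1) = Some u'" for i' u'
    using B0_part_downward[OF assms(2) that(2) _ pos(1) that(1) pos(2) _ assms(5)] assms(6)
    by auto
  have "(q, c + 1) \<in> dom A"
    using young_dom_downward[OF assms(1,8) pos(1) assms(7)] by simp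
  then obtain u' where u': "A (q, c + 1) = Some u'"
    by auto
  have "elt_less w u'"
    using B1_rows_strictD[OF assms(3) _ assms(5) u' assms(6)] B1_right[OF order_refl u'] by simp
  moreover have "elt_le u' u"
    using B1_cols_weakD'[OF assms(4) assms(7) u' assms(8)] B1_right[OF order_refl u']
      B1_right[OF assms(7,8)] by blast
  ultimately show ?thesis
    using B1_right[OF assms(7,8)] elt_less_le_trans by blast
qed

lemma col_bump_row_le:
  assumes "B1_cols_weak A" "A (r, c) = Some w" "isB1 w"
    and min: "\<forall>r' w'. A (r', c) = Some w' \<and> elt_less z w' \<longrightarrow> elt_le w w' \<and> (w' = w \<longrightarrow> r \<le> r')"
    and "A (q, c) = Some u" "isB1 u" "elt_less z u"
  shows "r \<le> q"
proof (rule ccontr)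
  assume "\<not> r \<le> q"
  then have "elt_le u w"
    using B1_cols_weakD[OF assms(1) _ assms(5,2,6,3)] by simp
  moreover have "elt_le w u \<and> (u = w \<longrightarrow> r \<le> q)"
    using min assms(5,7) by blast
  ultimately show False
    using elt_le_antisym \<open>\<not> r \<le> q\<close> by blast
qed

section \<open>Column insertion of a B1 letter\<close>

definition bumping_path :: "tab \<Rightarrow> nat \<Rightarrow> (nat \<Rightarrow> entry) \<Rightarrow> (nat \<Rightarrow> nat) \<Rightarrow> bool" where
  "bumping_path A k X R \<longleftrightarrow> (\<forall>c. 1 \<le> c \<longrightarrow> c \<le> k \<longrightarrow>
     A (R c, c) = Some (X c) \<and> isB1 (X c) \<and> (c < k \<longrightarrow> elt_less (X c) (X (c + 1))))"

lemma bumping_pathD: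
  "bumping_path A k X R \<Longrightarrow> 1 \<le> c \<Longrightarrow> c \<le> k \<Longrightarrow> A (R c, c) = Some (X c) \<and> isB1 (X c)"
  unfolding bumping_path_def by blast

lemma bumping_path_less:
  "bumping_path A k X R \<Longrightarrow> 1 \<le> c \<Longrightarrow> c < k \<Longrightarrow> elt_less (X c) (X (c + 1))"
  unfolding bumping_path_def by simp

lemma bumping_path_snoc:
  assumes "bumping_path A (c - 1) X R" "isB1 z" "2 \<le> c \<Longrightarrow> elt_less (X (c - 1)) z"
  shows "bumping_path (A((r, c) \<mapsto> z)) c (X(c := z)) (R(c := r))"
  unfolding bumping_path_def
proof (intro allI impI)
  fix c'
  assume c': "1 \<le> c'" "c' \<le> c"
  show "(A((r, c) \<mapsto> z)) ((R(c := r)) c', c') = Some ((X(c := z)) c') \<and> isB1 ((X(c := z)) c') \<and>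
      (c' < c \<longrightarrow> elt_less ((X(c := z)) c') ((X(c := z)) (c' + 1)))"
  proof (cases "c' = c")
    case False
    then have "c' \<le> c - 1"
      using c' by simp
    then show ?thesis
      using assms c' False unfolding bumping_path_def by auto
  qed (use assms(2) in simp)
qed

definition extends_by_path :: "tab \<Rightarrow> tab \<Rightarrow> nat \<Rightarrow> (nat \<Rightarrow> entry) \<Rightarrow> (nat \<Rightarrow> nat) \<Rightarrow> bool" where
  "extends_by_path T T1 k X R \<longleftrightarrow> (R k, k) \<notin> dom T \<and> dom T1 = insert (R k, k) (dom T) \<and>
     young (dom T1) \<and> (\<forall>p e. \<not> isB1 e \<longrightarrow> (T1 p = Some e \<longleftrightarrow> T p = Some e)) \<and>
     B1_rows_strict T1 \<and> B1_cols_weak T1 \<and> bumping_path T1 k X R"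

text \<open>The B1 letter z is to be inserted into column c of A; for c \<ge> 2 it has just been
  displaced from the box (R (c - 1), c - 1), which now holds X (c - 1).\<close>

locale B1_col_ins_state =
  fixes T A :: tab and X :: "nat \<Rightarrow> entry" and R :: "nat \<Rightarrow> nat" and z :: entry and c :: nat
  assumes young_dom_T: "young (dom T)" and young_sigma_T: "young (sigma_part T)"
    and z_B1: "isB1 z" and c_pos: "1 \<le> c" and dom_eq: "dom A = dom T"
    and B0_eq: "\<And>p e. \<not> isB1 e \<Longrightarrow> A p = Some e \<longleftrightarrow> T p = Some e"
    and right_eq: "\<And>i j. c \<le> j \<Longrightarrow> A (i, j) = T (i, j)"
    and rows_strict: "B1_rows_strict A" and cols_weak: "B1_cols_weak A"
    and path: "bumping_path A (c - 1) X R"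
    and path_less: "2 \<le> c \<Longrightarrow> elt_less (X (c - 1)) z"
    and source_right: "\<And>u. 2 \<le> c \<Longrightarrow> A (R (c - 1), c) = Some u \<Longrightarrow> isB1 u \<Longrightarrow> elt_less z u"
begin

lemma young_dom: "young (dom A)"
  using young_dom_T dom_eq by simp

lemma young_sigma: "young (sigma_part A)"
  using young_sigma_T sigma_part_eqI[OF B0_eq] by simp

lemma source_right_B1:
  assumes "2 \<le> c" "A (R (c - 1), c) = Some u"
  shows "isB1 u \<and> elt_less z u"
proof -
  have X: "A (R (c - 1), c - 1) = Some (X (c - 1))" "isB1 (X (c - 1))"
    using bumping_pathD[OF path] assms(1) by auto
  have "1 \<le> R (c - 1)"
    using young_dom_pos[OF young_dom X(1)] by blast
  then have "isB1 u"
    using B0_part_downward[OF young_sigma assms(2) _ _ order_refl _ _ X(1)] X(2) assms(1) by fastforce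
  then show ?thesis
    using source_right assms by blast
qed

lemma left_less:
  assumes "1 \<le> r" "2 \<le> c \<Longrightarrow> r \<le> R (c - 1)" "j < c" "A (r, j) = Some u" "isB1 u"
  shows "elt_less u z"
proof -
  have "1 \<le> j"
    using young_dom_pos[OF young_dom assms(4)] by blast
  then have c2: "2 \<le> c"
    using assms(3) by simp
  have X: "A (R (c - 1), c - 1) = Some (X (c - 1))" "isB1 (X (c - 1))"
    using bumping_pathD[OF path] c2 by auto
  have "(r, c - 1) \<in> dom A"
    by (rule young_dom_downward[OF young_dom X(1) assms(1) assms(2)[OF c2]]) (use c2 in auto)
  then obtain u' where u': "A (r, c - 1) = Some u'"
    by auto
  have "elt_less u' z" if "isB1 u'"
    using B1_cols_weakD'[OF cols_weak assms(2)[OF c2] u' X(1) that X(2)] path_less[OF c2]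
      elt_le_less_trans by blast
  then show ?thesis
    using B1_left_less[OF young_sigma rows_strict u' _ \<open>1 \<le> j\<close> _ assms(4,5)] assms(3) by simp
qed

lemma append_below_source:
  assumes none: "\<forall>r w. A (r, c) = Some w \<longrightarrow> \<not> elt_less z w" and "2 \<le> c"
  shows "col_len A c + 1 \<le> R (c - 1)"
proof -
  have "(R (c - 1), c) \<notin> dom A"
    using source_right_B1[OF assms(2)] none by auto
  then have "R (c - 1) \<notin> {1..col_len A c}"
    unfolding young_col_len[OF young_dom, symmetric] by simp
  moreover have "1 \<le> R (c - 1)"
    using bumping_pathD[OF path, of "c - 1"] young_dom_pos[OF young_dom] assms(2) by force
  ultimately show ?thesis
    by simp
qed

lemma append_young:
  assumes none: "\<forall>r w. A (r, c) = Some w \<longrightarrow> \<not> elt_less z w"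
  shows "young (insert (col_len A c + 1, c) (dom A))"
proof (rule young_insert[OF young_dom _ c_pos])
  show "col_len A c + 1 = 1 \<or> (col_len A c + 1 - 1, c) \<in> dom A"
    using young_col_len[OF young_dom, of c] by auto
  show "c = 1 \<or> (col_len A c + 1, c - 1) \<in> dom A"
  proof (cases "c = 1")
    case False
    then have c2: "2 \<le> c"
      using c_pos by simp
    then have "A (R (c - 1), c - 1) = Some (X (c - 1))"
      using bumping_pathD[OF path] by simp
    then have "(col_len A c + 1, c - 1) \<in> dom A"
      by (rule young_dom_downward[OF young_dom _ _ append_below_source[OF none c2]]) (use c2 in auto)
    then show ?thesis ..
  qed simp
qed simp

lemma append_extends:
  assumes none: "\<forall>r w. A (r, c) = Some w \<longrightarrow> \<not> elt_less z w"
  defines "L \<equiv> col_len A c"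
  shows "extends_by_path T (A((L + 1, c) \<mapsto> z)) c (X(c := z)) (R(c := L + 1))"
proof -
  have col: "{i. (i, c) \<in> dom A} = {1..L}"
    using young_col_len[OF young_dom] unfolding L_def .
  have "L + 1 \<notin> {i. (i, c) \<in> dom A}"
    using col by simp
  then have new: "(L + 1, c) \<notin> dom T"
    using dom_eq by simp
  have "B1_rows_strict (A((L + 1, c) \<mapsto> z))"
  proof (rule B1_rows_strict_upd[OF rows_strict])
    show "elt_less u z" if "j < c" "A (L + 1, j) = Some u" "isB1 u" for j u
      using left_less[OF _ append_below_source[OF none, folded L_def] that] by simp
    show "elt_less z u" if "c < j" "A (L + 1, j) = Some u" "isB1 u" for j u
      using young_dom_downward[OF young_dom that(2), of "L + 1" c] that(1) c_pos new dom_eq by simp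
  qed
  moreover have "B1_cols_weak (A((L + 1, c) \<mapsto> z))"
  proof (rule B1_cols_weak_upd[OF cols_weak])
    show "elt_le u z" if "i < L + 1" "A (i, c) = Some u" "isB1 u" for i u
      using none that(2) not_elt_less by blast
    show "elt_le z u" if "L + 1 < i" "A (i, c) = Some u" "isB1 u" for i u
    proof -
      have "i \<in> {i. (i, c) \<in> dom A}"
        using that(2) by auto
      then show ?thesis
        using that(1) unfolding col by simp
    qed
  qed
  moreover have "\<not> isB1 e \<Longrightarrow> (A((L + 1, c) \<mapsto> z)) p = Some e \<longleftrightarrow> T p = Some e" for p e
    using B0_eq[of e p] new z_B1 by auto
  ultimately show ?thesis
    unfolding extends_by_path_def
    using new append_young[OF none, folded L_def] dom_eq bumping_path_snoc[OF path z_B1 path_less]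
    by simp
qed

lemma bump_below_source:
  assumes w: "A (r, c) = Some w" "elt_less z w"
    and min: "\<forall>r' w'. A (r', c) = Some w' \<and> elt_less z w' \<longrightarrow> elt_le w w' \<and> (w' = w \<longrightarrow> r \<le> r')"
    and "2 \<le> c"
  shows "r \<le> R (c - 1)"
proof (rule ccontr)
  assume "\<not> r \<le> R (c - 1)"
  moreover have "1 \<le> R (c - 1)"
    using bumping_pathD[OF path, of "c - 1"] young_dom_pos[OF young_dom] assms(4) by force
  ultimately have "(R (c - 1), c) \<in> dom A"
    using young_dom_downward[OF young_dom w(1)] c_pos by simp
  then obtain u where "A (R (c - 1), c) = Some u"
    by auto
  then have "r \<le> R (c - 1)"
    using source_right_B1[OF assms(4)] col_bump_row_le[OF cols_weak w(1) _ min]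
      isB1_upward[OF w(2) z_B1] by blast
  with \<open>\<not> r \<le> R (c - 1)\<close> show False
    by simp
qed

lemma bump_state:
  assumes w: "A (r, c) = Some w" "elt_less z w"
    and min: "\<forall>r' w'. A (r', c) = Some w' \<and> elt_less z w' \<longrightarrow> elt_le w w' \<and> (w' = w \<longrightarrow> r \<le> r')"
  shows "isB1 w" and "B1_col_ins_state T (A((r, c) \<mapsto> z)) (X(c := z)) (R(c := r)) w (c + 1)"
proof -
  show w_B1: "isB1 w"
    using isB1_upward w(2) z_B1 by blast
  note row_le = col_bump_row_le[OF cols_weak w(1) w_B1 min]
  have r_pos: "1 \<le> r"
    using young_dom_pos[OF young_dom w(1)] by blast
  show "B1_col_ins_state T (A((r, c) \<mapsto> z)) (X(c := z)) (R(c := r)) w (c + 1)"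
  proof unfold_locales
    show "young (dom T)" "young (sigma_part T)" "isB1 w" "1 \<le> c + 1"
      using young_dom_T young_sigma_T w_B1 by auto
    show "dom (A((r, c) \<mapsto> z)) = dom T"
      using dom_eq w(1) by auto
    show "\<not> isB1 e \<Longrightarrow> (A((r, c) \<mapsto> z)) p = Some e \<longleftrightarrow> T p = Some e" for p e
      using B0_eq[of e p] right_eq[of c r] w(1) z_B1 w_B1 by auto
    show "c + 1 \<le> j \<Longrightarrow> (A((r, c) \<mapsto> z)) (i, j) = T (i, j)" for i j
      using right_eq by simp
    show "B1_rows_strict (A((r, c) \<mapsto> z))"
    proof (rule B1_rows_strict_upd[OF rows_strict])
      show "elt_less u z" if "j < c" "A (r, j) = Some u" "isB1 u" for j u
        using left_less[OF r_pos bump_below_source[OF w min] that] .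
      show "elt_less z u" if "c < j" "A (r, j) = Some u" "isB1 u" for j u
        using B1_rows_strictD[OF rows_strict that(1) w(1) that(2) w_B1 that(3)] w(2) elt_less_trans
        by blast
    qed
    show "B1_cols_weak (A((r, c) \<mapsto> z))"
    proof (rule B1_cols_weak_upd[OF cols_weak])
      show "elt_le u z" if "i < r" "A (i, c) = Some u" "isB1 u" for i u
        using row_le[OF that(2,3)] that(1) not_elt_less by fastforce
      show "elt_le z u" if "r < i" "A (i, c) = Some u" "isB1 u" for i u
        using B1_cols_weakD[OF cols_weak that(1) w(1) that(2) w_B1 that(3)] w(2)
          elt_less_le_trans unfolding elt_le_def by blast
    qed
    show "bumping_path (A((r, c) \<mapsto> z)) (c + 1 - 1) (X(c := z)) (R(c := r))"
      using bumping_path_snoc[OF path z_B1 path_less] by simp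
    show "2 \<le> c + 1 \<Longrightarrow> elt_less ((X(c := z)) (c + 1 - 1)) w"
      using w(2) by simp
    show "elt_less w u"
      if "2 \<le> c + 1" "(A((r, c) \<mapsto> z)) ((R(c := r)) (c + 1 - 1), c + 1) = Some u" "isB1 u" for u
      using B1_rows_strictD[OF rows_strict _ w(1) _ w_B1 that(3), of "c + 1"] that(2) by simp
  qed
qed

end

lemma B1_col_insertion_extends:
  "ins_run A job T1 b \<Longrightarrow> job = ColIns y d \<Longrightarrow> B1_col_ins_state T A X R y d \<Longrightarrow>
    \<exists>k X' R'. d \<le> k \<and> extends_by_path T T1 k X' R'"
proof (induction arbitrary: y d X R rule: ins_run.induct)
  case (col_append A c z)
  then show ?case
    using B1_col_ins_state.append_extends by blast
next
  case (col_bump A r c w z T' b)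
  then have st: "B1_col_ins_state T A X R z c"
    by simp
  have "isB1 w"
    using B1_col_ins_state.bump_state(1)[OF st col_bump.hyps(1-3)] .
  then have "\<exists>k X' R'. c + 1 \<le> k \<and> extends_by_path T T' k X' R'"
    using col_bump.IH[OF _ B1_col_ins_state.bump_state(2)[OF st col_bump.hyps(1-3)]] by simp
  then show ?case
    using col_bump.prems(1) by (auto dest: Suc_leD)
qed simp_all

section \<open>Row insertion of a B0 letter after a column insertion\<close>

locale bumped_tableau =
  fixes T1 :: tab and k :: nat and X :: "nat \<Rightarrow> entry" and R :: "nat \<Rightarrow> nat"
  assumes young_dom: "young (dom T1)" and young_sigma: "young (sigma_part T1)"
    and rows_strict: "B1_rows_strict T1" and cols_weak: "B1_cols_weak T1"
    and B0_cols: "B0_cols_strict T1"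
    and k_pos: "1 \<le> k" and path: "bumping_path T1 k X R"
    and col_k_bottom: "\<And>r. (r, k) \<in> dom T1 \<Longrightarrow> r \<le> R k"

text \<open>The B0 letter z is to be inserted into row r of A; for r \<ge> 2 it was displaced from
  row r - 1 while that row still agreed with T1.\<close>

locale row_phase = bumped_tableau +
  fixes A :: tab and z :: entry and r :: nat
  assumes z_B0: "\<not> isB1 z" and r_pos: "1 \<le> r" and dom_eq: "dom A = dom T1"
    and B1_eq: "\<And>p e. isB1 e \<Longrightarrow> A p = Some e \<longleftrightarrow> T1 p = Some e"
    and lower_eq: "\<And>i j. r \<le> i \<Longrightarrow> A (i, j) = T1 (i, j)"
    and source: "2 \<le> r \<Longrightarrow> \<exists>d. T1 (r - 1, d) = Some z"

locale col_phase = bumped_tableau +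
  fixes A :: tab and v :: entry and c :: nat
  assumes v_B1: "isB1 v" and c_pos: "1 \<le> c" and dom_eq: "dom A = dom T1"
    and B1_eq: "\<And>i j e. c \<le> j \<Longrightarrow> isB1 e \<Longrightarrow> A (i, j) = Some e \<longleftrightarrow> T1 (i, j) = Some e"
    and on_path: "c \<le> k \<Longrightarrow> elt_less v (X c)"
    and beyond_path: "k < c \<Longrightarrow>
      \<exists>q. 1 \<le> q \<and> q \<le> R k \<and> (\<forall>i w. q \<le> i \<longrightarrow> T1 (i, c) = Some w \<longrightarrow> isB1 w \<and> elt_less v w)"

context bumped_tableau
begin

lemma col_phaseI:
  assumes w_B1: "isB1 w" and dom: "dom A' = dom T1"
    and right: "\<And>i j e. c < j \<Longrightarrow> isB1 e \<Longrightarrow> A' (i, j) = Some e \<longleftrightarrow> T1 (i, j) = Some e"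
    and w: "T1 (r, c) = Some w"
    and on_path: "c < k \<Longrightarrow> elt_le w (X c)" and beyond_path: "k \<le> c \<Longrightarrow> r \<le> R k"
  shows "col_phase T1 k X R A' w (c + 1)"
proof (intro col_phase.intro[OF bumped_tableau_axioms] col_phase_axioms.intro)
  have pos: "1 \<le> r" "1 \<le> c"
    using young_dom_pos[OF young_dom w] by auto
  show "isB1 w" "1 \<le> c + 1" "dom A' = dom T1"
    using w_B1 dom by auto
  show "c + 1 \<le> j \<Longrightarrow> isB1 e \<Longrightarrow> A' (i, j) = Some e \<longleftrightarrow> T1 (i, j) = Some e" for i j e
    using right by simp
  show "elt_less w (X (c + 1))" if "c + 1 \<le> k"
    using on_path bumping_path_less[OF path pos(2)] that elt_le_less_trans by simp
  show "\<exists>q. 1 \<le> q \<and> q \<le> R k \<and>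
      (\<forall>i u. q \<le> i \<longrightarrow> T1 (i, c + 1) = Some u \<longrightarrow> isB1 u \<and> elt_less w u)" if "k < c + 1"
    using beyond_path that pos(1) B1_next_col_greater[OF young_dom young_sigma rows_strict cols_weak w w_B1]
    by auto
qed

end

context row_phase
begin

lemma source_less:
  assumes "2 \<le> r" "T1 (r - 1, d) = Some z" "A (r, d) = Some w"
  shows "elt_less z w"
proof (cases "isB1 w")
  case False
  have "T1 (r, d) = Some w"
    using lower_eq assms(3) by simp
  then show ?thesis
    using B0_cols_strictD[OF B0_cols _ assms(2) _ z_B0 False, of r] assms(1) by simp
qed (use elt_less_B0_B1 z_B0 in blast)

lemma append_box:
  assumes none: "\<forall>c w. A (r, c) = Some w \<longrightarrow> \<not> elt_less z w"
  shows "k \<le> row_len A r \<and> r \<le> R k"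
proof -
  define L where "L = row_len A r"
  have row: "{j. (r, j) \<in> dom T1} = {1..L}"
    using young_row_len[of A r] young_dom unfolding L_def dom_eq by simp
  have "k \<le> L"
  proof (rule ccontr)
    assume "\<not> k \<le> L"
    then have P: "T1 (R (L + 1), L + 1) = Some (X (L + 1))" "isB1 (X (L + 1))"
      using bumping_pathD[OF path] by auto
    have i_pos: "1 \<le> R (L + 1)"
      using young_dom_pos[OF young_dom P(1)] by blast
    have "R (L + 1) < r"
    proof (rule ccontr)
      assume "\<not> R (L + 1) < r"
      then have "L + 1 \<in> {j. (r, j) \<in> dom T1}"
        using young_dom_downward[OF young_dom P(1) r_pos] by simp
      then show False
        unfolding row by simp
    qed
    then have r2: "2 \<le> r"
      using i_pos by simp
    then obtain d where d: "T1 (r - 1, d) = Some z"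
      using source by blast
    have "L < d"
    proof (rule ccontr)
      assume "\<not> L < d"
      moreover have "1 \<le> d"
        using young_dom_pos[OF young_dom d] by blast
      ultimately have "(r, d) \<in> dom A"
        using row dom_eq by auto
      then obtain w where "A (r, d) = Some w"
        by auto
      then show False
        using source_less[OF r2 d] none by blast
    qed
    then have "\<not> isB1 (X (L + 1))"
      using B0_part_downward[OF young_sigma d z_B0 i_pos _ _ _ P(1)] \<open>R (L + 1) < r\<close> by simp
    with P(2) show False
      by simp
  qed
  moreover have "(r, k) \<in> dom T1"
    using row \<open>k \<le> L\<close> k_pos by auto
  ultimately show ?thesis
    using col_k_bottom unfolding L_def by blast
qed

lemma bump_B0:
  assumes w: "A (r, c) = Some w" "\<not> isB1 w"
  shows "row_phase T1 k X R (A((r, c) \<mapsto> z)) w (r + 1)"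
proof (intro row_phase.intro[OF bumped_tableau_axioms] row_phase_axioms.intro)
  have T1_w: "T1 (r, c) = Some w"
    using lower_eq w(1) by simp
  show "\<not> isB1 w" "1 \<le> r + 1"
    using w(2) by auto
  show "dom (A((r, c) \<mapsto> z)) = dom T1"
    using dom_eq w(1) by auto
  show "isB1 e \<Longrightarrow> (A((r, c) \<mapsto> z)) p = Some e \<longleftrightarrow> T1 p = Some e" for p e
    using B1_eq[of e p] T1_w w(2) z_B0 by auto
  show "r + 1 \<le> i \<Longrightarrow> (A((r, c) \<mapsto> z)) (i, j) = T1 (i, j)" for i j
    using lower_eq by simp
  show "\<exists>d. T1 (r + 1 - 1, d) = Some w"
    using T1_w by auto
qed

lemma B1_weakly_left_below:
  assumes w: "A (r, c) = Some w" "isB1 w"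
    and min: "\<forall>c' w'. A (r, c') = Some w' \<and> elt_less z w' \<longrightarrow> elt_le w w' \<and> (w' = w \<longrightarrow> c \<le> c')"
    and e: "j \<le> c" "T1 (i, j) = Some e" "isB1 e"
  shows "r \<le> i"
proof (rule ccontr)
  assume "\<not> r \<le> i"
  have ij: "1 \<le> i" "1 \<le> j"
    using young_dom_pos[OF young_dom e(2)] by auto
  then have r2: "2 \<le> r"
    using \<open>\<not> r \<le> i\<close> by simp
  then obtain d where d: "T1 (r - 1, d) = Some z"
    using source by blast
  have T1_w: "T1 (r, c) = Some w"
    using lower_eq w(1) by simp
  have "c \<le> d"
  proof (rule ccontr)
    assume "\<not> c \<le> d"
    moreover have "1 \<le> d"
      using young_dom_pos[OF young_dom d] by blast
    ultimately have "(r, d) \<in> dom T1"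
      using young_dom_downward[OF young_dom T1_w r_pos] by simp
    then obtain w' where w': "T1 (r, d) = Some w'"
      by auto
    then have "A (r, d) = Some w'"
      using lower_eq by simp
    then have "elt_le w w' \<and> (w' = w \<longrightarrow> c \<le> d)"
      using min source_less[OF r2 d] by blast
    then have "elt_less w w'"
      using \<open>\<not> c \<le> d\<close> unfolding elt_le_def by auto
    moreover have "elt_less w' w"
      using B1_rows_strictD[OF rows_strict _ w' T1_w _ w(2)] isB1_upward[OF calculation w(2)]
        \<open>\<not> c \<le> d\<close> by simp
    ultimately show False
      using elt_less_asym by blast
  qed
  then have "\<not> isB1 e"
    using B0_part_downward[OF young_sigma d z_B0 ij(1) _ ij(2) _ e(2)] \<open>\<not> r \<le> i\<close> e(1) by simp
  with e(3) show False
    by simp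
qed

lemma bump_B1:
  assumes w: "A (r, c) = Some w" "elt_less z w" "isB1 w"
    and min: "\<forall>c' w'. A (r, c') = Some w' \<and> elt_less z w' \<longrightarrow> elt_le w w' \<and> (w' = w \<longrightarrow> c \<le> c')"
  shows "col_phase T1 k X R (A((r, c) \<mapsto> z)) w (c + 1)"
proof -
  have T1_w: "T1 (r, c) = Some w"
    using lower_eq w(1) by simp
  note below = B1_weakly_left_below[OF w(1,3) min]
  show ?thesis
  proof (rule col_phaseI[OF w(3) _ _ T1_w])
    show "dom (A((r, c) \<mapsto> z)) = dom T1"
      using dom_eq w(1) by auto
    show "c < j \<Longrightarrow> isB1 e \<Longrightarrow> (A((r, c) \<mapsto> z)) (i, j) = Some e \<longleftrightarrow> T1 (i, j) = Some e" for i j e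
      using B1_eq by simp
    show "elt_le w (X c)" if "c < k"
    proof -
      have "1 \<le> c"
        using young_dom_pos[OF young_dom T1_w] by blast
      then have P: "T1 (R c, c) = Some (X c)" "isB1 (X c)"
        using bumping_pathD[OF path] that by auto
      then show ?thesis
        using B1_cols_weakD'[OF cols_weak below[OF order_refl P] T1_w P(1) w(3) P(2)] by blast
    qed
    show "r \<le> R k" if "k \<le> c"
      using below[OF that] bumping_pathD[OF path k_pos order_refl] by blast
  qed
qed

end

context col_phase
begin

lemma append_box:
  assumes none: "\<forall>r w. A (r, c) = Some w \<longrightarrow> \<not> elt_less v w"
  shows "k < c \<and> col_len A c + 1 \<le> R k"
proof -
  have "k < c"
  proof (rule ccontr)
    assume "\<not> k < c"
    then have "T1 (R c, c) = Some (X c)" "isB1 (X c)"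
      using bumping_pathD[OF path c_pos] by auto
    then have "A (R c, c) = Some (X c)"
      using B1_eq by blast
    then show False
      using none on_path \<open>\<not> k < c\<close> by auto
  qed
  then obtain q where q: "1 \<le> q" "q \<le> R k"
    and above: "\<And>i w. q \<le> i \<Longrightarrow> T1 (i, c) = Some w \<Longrightarrow> isB1 w \<and> elt_less v w"
    using beyond_path by blast
  have "{i. A (i, c) \<noteq> None} \<subseteq> {1..<q}"
  proof
    fix i
    assume "i \<in> {i. A (i, c) \<noteq> None}"
    then obtain w where w: "T1 (i, c) = Some w"
      using dom_eq by (auto simp: dom_def)
    have "i < q"
    proof (rule ccontr)
      assume "\<not> i < q"
      then have "isB1 w \<and> elt_less v w"
        using above[of i w] w by simp
      then show False
        using B1_eq[OF order_refl] w none by blast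
    qed
    then show "i \<in> {1..<q}"
      using young_dom_pos[OF young_dom w] by simp
  qed
  then have "col_len A c \<le> q - 1"
    unfolding col_len_def using card_mono[of "{1..<q}"] by fastforce
  then show ?thesis
    using \<open>k < c\<close> q by simp
qed

lemma bumped_letter:
  assumes w: "A (r, c) = Some w" "elt_less v w"
    and min: "\<forall>r' w'. A (r', c) = Some w' \<and> elt_less v w' \<longrightarrow> elt_le w w' \<and> (w' = w \<longrightarrow> r \<le> r')"
  shows "isB1 w" and "T1 (r, c) = Some w"
    and "\<And>q u. T1 (q, c) = Some u \<Longrightarrow> elt_less v u \<Longrightarrow> r \<le> q"
proof -
  show w_B1: "isB1 w"
    using isB1_upward w(2) v_B1 by blast
  show T1_w: "T1 (r, c) = Some w"
    using B1_eq[OF order_refl w_B1] w(1) by blast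
  have "\<forall>r' w'. T1 (r', c) = Some w' \<and> elt_less v w' \<longrightarrow> elt_le w w' \<and> (w' = w \<longrightarrow> r \<le> r')"
    using min B1_eq[OF order_refl] isB1_upward v_B1 by blast
  then show "r \<le> q" if "T1 (q, c) = Some u" "elt_less v u" for q u
    using col_bump_row_le[OF cols_weak T1_w w_B1 _ that(1) isB1_upward[OF that(2) v_B1] that(2)]
    by blast
qed

lemma bump_row_bound:
  assumes w: "A (r, c) = Some w" "elt_less v w"
    and min: "\<forall>r' w'. A (r', c) = Some w' \<and> elt_less v w' \<longrightarrow> elt_le w w' \<and> (w' = w \<longrightarrow> r \<le> r')"
    and "k \<le> c"
  shows "r \<le> R k"
proof (cases "c = k")
  case True
  then show ?thesis
    using col_k_bottom bumped_letter(2)[OF w min] by blast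
next
  case False
  then obtain q where q: "1 \<le> q" "q \<le> R k"
    and above: "\<forall>i u. q \<le> i \<longrightarrow> T1 (i, c) = Some u \<longrightarrow> isB1 u \<and> elt_less v u"
    using beyond_path assms(4) by auto
  have "r \<le> q"
  proof (rule ccontr)
    assume "\<not> r \<le> q"
    then have "(q, c) \<in> dom T1"
      using young_dom_downward[OF young_dom bumped_letter(2)[OF w min] q(1)] c_pos by simp
    then obtain u where "T1 (q, c) = Some u"
      by auto
    then show False
      using bumped_letter(3)[OF w min] above \<open>\<not> r \<le> q\<close> by blast
  qed
  then show ?thesis
    using q by simp
qed

lemma bump:
  assumes w: "A (r, c) = Some w" "elt_less v w"
    and min: "\<forall>r' w'. A (r', c) = Some w' \<and> elt_less v w' \<longrightarrow> elt_le w w' \<and> (w' = w \<longrightarrow> r \<le> r')"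
  shows "col_phase T1 k X R (A((r, c) \<mapsto> v)) w (c + 1)"
proof (rule col_phaseI[OF bumped_letter(1)[OF w min] _ _ bumped_letter(2)[OF w min]])
  show "dom (A((r, c) \<mapsto> v)) = dom T1"
    using dom_eq w(1) by auto
  show "c < j \<Longrightarrow> isB1 e \<Longrightarrow> (A((r, c) \<mapsto> v)) (i, j) = Some e \<longleftrightarrow> T1 (i, j) = Some e" for i j e
    using B1_eq by simp
  show "elt_le w (X c)" if "c < k"
  proof -
    have "T1 (R c, c) = Some (X c)" "isB1 (X c)"
      using bumping_pathD[OF path c_pos] that by auto
    then have "A (R c, c) = Some (X c)"
      using B1_eq by blast
    then show ?thesis
      using min on_path that by simp
  qed
  show "r \<le> R k" if "k \<le> c"
    using bump_row_bound[OF w min that] .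
qed

end

context bumped_tableau
begin

fun job_inv :: "tab \<Rightarrow> job \<Rightarrow> bool" where
  "job_inv A (RowIns z r) \<longleftrightarrow> row_phase T1 k X R A z r"
| "job_inv A (ColIns v c) \<longleftrightarrow> col_phase T1 k X R A v c"

lemma ins_run_new_box:
  assumes "ins_run A job A' b" "\<not> b" "job_inv A job" "S \<in> dom A'" "S \<notin> dom T1"
  shows "k < snd S \<and> fst S \<le> R k"
  using assms
proof (induction rule: ins_run.induct)
  case (row_append A r z)
  then have st: "row_phase T1 k X R A z r"
    by simp
  then have "S = (r, row_len A r + 1)"
    using row_append.prems row_phase.dom_eq by fastforce
  then show ?case
    using row_phase.append_box[OF st row_append.hyps] by simp
next
  case (row_bump A r c w z T' b)
  then have st: "row_phase T1 k X R A z r"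
    by simp
  have "job_inv (A((r, c) \<mapsto> z)) (if isB1 w then ColIns w (c + 1) else RowIns w (r + 1))"
  proof (cases "isB1 w")
    case True
    then show ?thesis
      using row_phase.bump_B1[OF st row_bump.hyps(1,2) True row_bump.hyps(3)] by simp
  next
    case False
    then show ?thesis
      using row_phase.bump_B0[OF st row_bump.hyps(1) False] by simp
  qed
  then show ?case
    using row_bump.IH row_bump.prems by blast
next
  case (col_append A c z)
  then have st: "col_phase T1 k X R A z c"
    by simp
  then have "S = (col_len A c + 1, c)"
    using col_append.prems col_phase.dom_eq by fastforce
  then show ?case
    using col_phase.append_box[OF st col_append.hyps] by simp
next
  case (col_bump A r c w z T' b)
  then have st: "col_phase T1 k X R A z c"
    by simp
  have "job_inv (A((r, c) \<mapsto> z)) (if isB1 w then ColIns w (c + 1) else RowIns w (r + 1))"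
    using col_phase.bumped_letter(1)[OF st col_bump.hyps(1-3)] col_phase.bump[OF st col_bump.hyps(1-3)]
    by simp
  then show ?case
    using col_bump.IH col_bump.prems by blast
qed simp

end

lemma extends_by_path_bumped_tableau:
  assumes T: "young (dom T)" "young (sigma_part T)" "B0_cols_strict T"
    and ext: "extends_by_path T T1 k X R" and "1 \<le> k"
  shows "bumped_tableau T1 k X R"
proof
  have B0: "\<And>p e. \<not> isB1 e \<Longrightarrow> T1 p = Some e \<longleftrightarrow> T p = Some e"
    using ext unfolding extends_by_path_def by blast
  show "young (dom T1)" "B1_rows_strict T1" "B1_cols_weak T1" "bumping_path T1 k X R"
    using ext unfolding extends_by_path_def by blast+
  show "young (sigma_part T1)"
    using T(2) sigma_part_eqI[OF B0] by simp
  show "B0_cols_strict T1"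
    using T(3) B0 unfolding B0_cols_strict_def by metis
  show "1 \<le> k"
    by fact
  show "r \<le> R k" if "(r, k) \<in> dom T1" for r
  proof (rule ccontr)
    assume "\<not> r \<le> R k"
    moreover have "1 \<le> R k"
      using young_pos[OF \<open>young (dom T1)\<close>] ext unfolding extends_by_path_def by blast
    ultimately have "(R k, k) \<in> dom T"
      using that ext young_downward[OF T(1), of r k "R k" k] \<open>1 \<le> k\<close>
      unfolding extends_by_path_def by auto
    then show False
      using ext unfolding extends_by_path_def by blast
  qed
qed

theorem mainTheorem3:
  fixes m n :: nat and T T1 T2 :: tab and x y :: entry and S1 S2 :: "nat \<times> nat"
    and c1 :: bool
  assumes "0 < m" and "0 < n"
    and "spo_tableau m n T"
    and "x \<in> B1 n"
    and "col_insert x T T1 c1"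
    and "S1 \<in> dom T1" and "S1 \<notin> dom T"
    and "y \<in> B0 m"
    and "row_insert T1 y T2 False"
    and "S2 \<in> dom T2" and "S2 \<notin> dom T1"
  shows "snd S1 < snd S2 \<and> fst S2 \<le> fst S1"
proof -
  have YT: "young (dom T)" and YS: "young (sigma_part T)"
    using assms(3) unfolding spo_tableau_def by metis+
  note orders = spo_tableau_orders[OF assms(3)]
  have x: "isB1 x" and y: "\<not> isB1 y"
    using assms(4,8) unfolding B0_def B1_def by auto
  have "B1_col_ins_state T T X0 R0 x 1" for X0 R0
    by unfold_locales (use YT YS x orders in \<open>auto simp: bumping_path_def\<close>)
  then obtain k X R where "1 \<le> k" and ext: "extends_by_path T T1 k X R"
    using B1_col_insertion_extends assms(5) unfolding col_insert_def by blast
  then have S1: "S1 = (R k, k)"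
    using assms(6,7) unfolding extends_by_path_def by auto
  have BT: "bumped_tableau T1 k X R"
    using extends_by_path_bumped_tableau[OF YT YS orders(3) ext \<open>1 \<le> k\<close>] .
  interpret bumped_tableau T1 k X R
    by (rule BT)
  have "job_inv T1 (RowIns y 1)"
    using y by (auto intro!: row_phase.intro[OF BT] row_phase_axioms.intro)
  then have "k < snd S2 \<and> fst S2 \<le> R k"
    using ins_run_new_box assms(9-11) unfolding row_insert_def by blast
  with S1 show ?thesis
    by simp
qed

end
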